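(* Let UBEV-S (described in the context) be run for $K$ episodes on a finite-horizon episodic stationary MDP with $S$ states, $A$ actions and horizon $H$. Then $$\sum_{k=1}^K\sum_{t=1}^H\sum_{(s,a)\notin L_k}w_{tk}(s,a)=\tilde O(SAH).$$
   Context: Setting: finite-horizon episodic MDP with finite state set ($S$ states), finite action set ($A$ actions), horizon $H$, stationary transitions and mean rewards in $[0,1]$. UBEV-S is an algorithm (with failure tolerance $\delta\in(0,1]$) that in each episode $k$ plays a policy $\pi_k$ mapping (state, timestep) to actions. $w_{tk}(s,a)$ denotes the probability, in episode $k$ under $\pi_k$, of being in state $s$ at step $t$ and taking action $a$; $w_k(s,a)=\sum_{t\in[H]}w_{tk}(s,a)$. The set $L_k$ is $L_k=\{(s,a)\in\mathcal S\times\mathcal A:\ \frac14\sum_{j\le k}w_j(s,a)\ge H\ln\frac{9SA}{\delta}\}$. $\tilde O(\cdot)$ hides constants and factors polylogarithmic in quantities polynomial in $S,A,T,K,H,1/\delta$. *)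

theory Defs
  imports Complex_Main
begin

text \<open>States are 0..S-1, actions 0..A-1, steps 1..H, episodes 1..K.
  Initial-state distribution p0, transition kernel P s a s' (stationary).
  A (nonstationary) policy pol maps (state, step) to an action.\<close>

definition valid_mdp :: "nat \<Rightarrow> nat \<Rightarrow> (nat \<Rightarrow> real) \<Rightarrow> (nat \<Rightarrow> nat \<Rightarrow> nat \<Rightarrow> real) \<Rightarrow> bool" where
  "valid_mdp S A p0 P \<longleftrightarrow>
     (\<forall>s<S. 0 \<le> p0 s) \<and> (\<Sum>s<S. p0 s) = 1 \<and>
     (\<forall>s<S. \<forall>a<A. (\<forall>s'<S. 0 \<le> P s a s') \<and> (\<Sum>s'<S. P s a s') = 1)"

definition valid_policy :: "nat \<Rightarrow> nat \<Rightarrow> (nat \<Rightarrow> nat \<Rightarrow> nat) \<Rightarrow> bool" where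
  "valid_policy S A pol \<longleftrightarrow> (\<forall>s<S. \<forall>t. pol s t < A)"

text \<open>sdist S p0 P pol n s = probability of being in state s at step n+1.\<close>
fun sdist :: "nat \<Rightarrow> (nat \<Rightarrow> real) \<Rightarrow> (nat \<Rightarrow> nat \<Rightarrow> nat \<Rightarrow> real) \<Rightarrow> (nat \<Rightarrow> nat \<Rightarrow> nat) \<Rightarrow> nat \<Rightarrow> nat \<Rightarrow> real" where
  "sdist S p0 P pol 0 s = p0 s"
| "sdist S p0 P pol (Suc n) s' = (\<Sum>s<S. sdist S p0 P pol n s * P s (pol s (Suc n)) s')"

definition occ_t :: "nat \<Rightarrow> (nat \<Rightarrow> real) \<Rightarrow> (nat \<Rightarrow> nat \<Rightarrow> nat \<Rightarrow> real) \<Rightarrow> (nat \<Rightarrow> nat \<Rightarrow> nat) \<Rightarrow> nat \<Rightarrow> nat \<Rightarrow> nat \<Rightarrow> real" where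
  "occ_t S p0 P pol t s a = (if pol s t = a then sdist S p0 P pol (t - 1) s else 0)"

definition occ :: "nat \<Rightarrow> nat \<Rightarrow> (nat \<Rightarrow> real) \<Rightarrow> (nat \<Rightarrow> nat \<Rightarrow> nat \<Rightarrow> real) \<Rightarrow> (nat \<Rightarrow> nat \<Rightarrow> nat) \<Rightarrow> nat \<Rightarrow> nat \<Rightarrow> real" where
  "occ S H p0 P pol s a = (\<Sum>t=1..H. occ_t S p0 P pol t s a)"

definition known_set :: "nat \<Rightarrow> nat \<Rightarrow> nat \<Rightarrow> real \<Rightarrow> (nat \<Rightarrow> real) \<Rightarrow> (nat \<Rightarrow> nat \<Rightarrow> nat \<Rightarrow> real)
    \<Rightarrow> (nat \<Rightarrow> nat \<Rightarrow> nat \<Rightarrow> nat) \<Rightarrow> nat \<Rightarrow> (nat \<times> nat) set" where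
  "known_set S A H \<delta> p0 P pols k =
     {(s, a). s < S \<and> a < A \<and>
        (1/4) * (\<Sum>j=1..k. occ S H p0 P (pols j) s a) \<ge> real H * ln (9 * real S * real A / \<delta>)}"

end

theory Submission
  imports Defs
begin

text \<open>Since occupancies are nonnegative, the cumulative occupancy of a pair (s, a) is monotone in
  the episode index, so the episodes k with (s, a) \<notin> L_k form an initial segment on which the
  cumulative occupancy stays below 4 H ln(9SA/\<delta>). Hence each of the SA pairs contributes at most
  that threshold, and the sum is at most 4 SAH ln(9SA/\<delta>) = O(SAH ln(SAHK/\<delta>)).\<close>

lemma sdist_nonneg:
  assumes "valid_mdp S A p0 P" "valid_policy S A pol" "s < S"
  shows "0 \<le> sdist S p0 P pol n s"
  using assms(3)
proof (induction n arbitrary: s)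
  case 0
  then show ?case using assms(1) by (simp add: valid_mdp_def)
next
  case (Suc n)
  then show ?case
    using assms(1,2) unfolding valid_mdp_def valid_policy_def
    by (auto intro!: sum_nonneg mult_nonneg_nonneg)
qed

lemma occ_nonneg:
  assumes "valid_mdp S A p0 P" "valid_policy S A pol" "s < S"
  shows "0 \<le> occ S H p0 P pol s a"
  unfolding occ_def occ_t_def using sdist_nonneg[OF assms] by (auto intro!: sum_nonneg)

lemma mem_known_set_iff:
  assumes "s < S" "a < A"
  shows "(s, a) \<in> known_set S A H \<delta> p0 P pols k \<longleftrightarrow>
    4 * (real H * ln (9 * real S * real A / \<delta>)) \<le> (\<Sum>j=1..k. occ S H p0 P (pols j) s a)"
  using assms unfolding known_set_def by auto

lemma sum_while_prefix_sum_less_le: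
  fixes f :: "nat \<Rightarrow> real"
  assumes nonneg: "\<And>k. 0 \<le> f k" and "0 \<le> c"
  shows "(\<Sum>k=1..K. if (\<Sum>j=1..k. f j) < c then f k else 0) \<le> c"
proof -
  define M where "M = {k \<in> {1..K}. (\<Sum>j=1..k. f j) < c}"
  have sum_eq: "(\<Sum>k=1..K. if (\<Sum>j=1..k. f j) < c then f k else 0) = sum f M"
    unfolding M_def by (rule sum.inter_filter[symmetric]) simp
  show ?thesis
  proof (cases "M = {}")
    case True
    then show ?thesis using sum_eq \<open>0 \<le> c\<close> by simp
  next
    case False
    have "finite M" unfolding M_def by simp
    then have "Max M \<in> M" using False by (rule Max_in)
    have "M \<subseteq> {1..Max M}" using Max_ge[OF \<open>finite M\<close>] by (auto simp: M_def)
    then have "sum f M \<le> sum f {1..Max M}"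
      by (intro sum_mono2) (auto simp: nonneg)
    also have "\<dots> < c" using \<open>Max M \<in> M\<close> by (simp add: M_def)
    finally show ?thesis using sum_eq by simp
  qed
qed

lemma unknown_occupancy_le:
  assumes mdp: "valid_mdp S A p0 P" and pols: "\<And>k. valid_policy S A (pols k)"
    and "0 < \<delta>" "\<delta> \<le> 9 * real S * real A"
  shows "(\<Sum>k=1..K. \<Sum>t=1..H. \<Sum>(s, a) \<in> ({..<S} \<times> {..<A}) - known_set S A H \<delta> p0 P pols k.
           occ_t S p0 P (pols k) t s a)
         \<le> 4 * real S * real A * real H * ln (9 * real S * real A / \<delta>)"
proof -
  define X where "X = {..<S} \<times> {..<A}"
  define L where "L = known_set S A H \<delta> p0 P pols"
  define c where "c = 4 * (real H * ln (9 * real S * real A / \<delta>))"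
  define w where "w k s a = occ S H p0 P (pols k) s a" for k s a
  have "0 \<le> c" using assms(3,4) by (simp add: c_def)
  have w_nonneg: "0 \<le> w k s a" if "(s, a) \<in> X" for k s a
    using that occ_nonneg[OF mdp pols] by (auto simp: X_def w_def)
  have "(\<Sum>k=1..K. \<Sum>t=1..H. \<Sum>(s, a) \<in> X - L k. occ_t S p0 P (pols k) t s a)
      = (\<Sum>k=1..K. \<Sum>(s, a) \<in> X - L k. w k s a)"
    by (subst sum.swap) (simp add: w_def occ_def case_prod_beta)
  also have "\<dots> = (\<Sum>k=1..K. \<Sum>(s, a) \<in> X. if (s, a) \<in> L k then 0 else w k s a)"
    by (simp add: X_def sum.If_cases Diff_eq case_prod_beta)
  also have "\<dots> = (\<Sum>(s, a) \<in> X. \<Sum>k=1..K. if (\<Sum>j=1..k. w j s a) < c then w k s a else 0)"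
    by (subst sum.swap)
      (auto simp: X_def L_def c_def w_def mem_known_set_iff not_le intro!: sum.cong)
  also have "\<dots> \<le> (\<Sum>(s, a) \<in> X. c)"
    using \<open>0 \<le> c\<close> w_nonneg
    by (intro sum_mono) (auto simp del: One_nat_def intro!: sum_while_prefix_sum_less_le)
  also have "\<dots> = 4 * real S * real A * real H * ln (9 * real S * real A / \<delta>)"
    by (simp add: X_def c_def card_cartesian_product)
  finally show ?thesis by (simp add: X_def L_def)
qed

lemma ln_9_mult_le:
  fixes x y :: real
  assumes "0 < x" "x \<le> y"
  shows "ln (9 * x) \<le> 5 * ln (exp 1 + y)"
proof -
  have "ln (9 :: real) \<le> 4"
    using ln_realpow[of 3 2] ln_le_minus_one[of 3] by simp
  moreover have "ln x \<le> ln (exp 1 + y)"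
    using assms exp_gt_zero[of 1] by (intro ln_mono) linarith+
  moreover have "1 \<le> ln (exp 1 + y)"
    using assms ln_mono[of "exp 1" "exp 1 + y"] by simp
  ultimately show ?thesis using assms by (simp add: ln_mult)
qed

lemma ln_9_div_le:
  fixes a b \<delta> :: real
  assumes "1 \<le> a" "1 \<le> b" "0 < \<delta>"
  shows "ln (9 * a / \<delta>) \<le> 5 * ln (exp 1 + a * b / \<delta>)"
proof -
  have "a / \<delta> \<le> a * b / \<delta>"
    using assms by (intro divide_right_mono) (simp_all add: mult_le_cancel_left1)
  then show ?thesis using ln_9_mult_le[of "a / \<delta>" "a * b / \<delta>"] assms by simp
qed

theorem lemma3:
  shows "\<exists>C::real. \<exists>p::nat. \<forall>S A H K (\<delta>::real) p0 P pols.
     S \<ge> 1 \<longrightarrow> A \<ge> 1 \<longrightarrow> H \<ge> 1 \<longrightarrow> 0 < \<delta> \<longrightarrow> \<delta> \<le> 1 \<longrightarrow>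
     valid_mdp S A p0 P \<longrightarrow> (\<forall>k. valid_policy S A (pols k)) \<longrightarrow>
     (\<Sum>k=1..K. \<Sum>t=1..H. \<Sum>(s, a) \<in> ({..<S} \<times> {..<A}) - known_set S A H \<delta> p0 P pols k.
         occ_t S p0 P (pols k) t s a)
     \<le> C * real S * real A * real H * (ln (exp 1 + real S * real A * real H * real K / \<delta>)) ^ p"
proof (intro exI allI impI)
  fix S A H K :: nat and \<delta> :: real and p0 :: "nat \<Rightarrow> real"
    and P :: "nat \<Rightarrow> nat \<Rightarrow> nat \<Rightarrow> real" and pols :: "nat \<Rightarrow> nat \<Rightarrow> nat \<Rightarrow> nat"
  assume S: "S \<ge> 1" and A: "A \<ge> 1" and H: "H \<ge> 1" and \<delta>: "0 < \<delta>" "\<delta> \<le> 1"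
    and mdp: "valid_mdp S A p0 P" and pols: "\<forall>k. valid_policy S A (pols k)"
  let ?lhs = "\<Sum>k=1..K. \<Sum>t=1..H. \<Sum>(s, a) \<in> ({..<S} \<times> {..<A}) - known_set S A H \<delta> p0 P pols k.
         occ_t S p0 P (pols k) t s a"
  let ?y = "real S * real A * real H * real K / \<delta>"
  show "?lhs \<le> 20 * real S * real A * real H * (ln (exp 1 + ?y)) ^ 1"
  proof (cases "K = 0")
    case True
    then show ?thesis by simp
  next
    case False
    have "1 \<le> real S * real A" "1 \<le> real H * real K"
      using S A H False by (simp_all flip: of_nat_mult)
    then have log_le: "ln (9 * real S * real A / \<delta>) \<le> 5 * ln (exp 1 + ?y)"
      using ln_9_div_le[of "real S * real A" "real H * real K" \<delta>] \<delta> by (simp add: mult.assoc)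
    have "?lhs \<le> 4 * real S * real A * real H * ln (9 * real S * real A / \<delta>)"
      using \<open>1 \<le> real S * real A\<close> \<delta>
      by (intro unknown_occupancy_le[OF mdp pols[rule_format]]) simp_all
    also have "\<dots> \<le> 4 * real S * real A * real H * (5 * ln (exp 1 + ?y))"
      using log_le by (intro mult_left_mono) simp_all
    finally show ?thesis by simp
  qed
qed

end
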